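(* For the cyclically closed $2\times2\times M$ lattice model described in the context, with arbitrary real couplings $(J_\alpha)_{\alpha\in\Phi}$ and temperature $T>0$, let $Z_M=\sum_\sigma \exp(-\mathcal H(\sigma)/(k_BT))$ (sum over all $\sigma\in\{-1,1\}^{4M}$), let $Z'_M$ be the same sum restricted to non-percolation configurations, and let $P_M=Z'_M/Z_M$ be the non-percolation probability. Let $\lambda_{\max}$ be the largest real root of the characteristic equation of the $4\times4$ matrix $\tau$, and $\mu_{\max}$ the largest real root of the characteristic equation of the $3\times3$ matrix $\tau'$, both defined in the context. Then $$\lim_{M\to\infty}\frac{\ln P_M}{M}=\ln\frac{\mu_{\max}}{\lambda_{\max}}.$$
   Context: Lattice: sites $t_i^m$, $i\in\{0,1,2,3\}$, $m\in\{0,\dots,M-1\}$, with cyclic closure $t_i^M\equiv t_i^0$; each site carries a spin $\sigma_{t_i^m}=\sigma_i^m\in\{-1,1\}$. For a set $\Omega$ of sites, $\sigma_\Omega=\prod_{t\in\Omega}\sigma_t$. For fixed $m$ write $a_i=t_i^m$, $b_i=t_i^{m+1}$, and $C_m=\{a_0,\dots,a_3,b_0,\dots,b_3\}$. Let $\rho$ be the rotation $\rho(a_i)=a_{i+1\bmod4}$, $\rho(b_i)=b_{i+1\bmod 4}$. Generating supports $\Phi=\Phi_2\cup\Phi_4\cup\Phi_6\cup\Phi_8$: $\Phi_2=\{\{a_0,a_1\},\{a_0,a_2\},\{b_0,b_1\},\{b_0,b_2\},\{a_0,b_0\},\{a_0,b_1\},\{a_0,b_2\},\{a_0,b_3\}\}$;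 $\Phi_4$ consists of the 22 sets $\{a_0,b_0,b_1,b_2\}$, $\{a_0,b_1,b_2,b_3\}$, $\{a_0,b_2,b_3,b_0\}$, $\{a_0,b_3,b_0,b_1\}$, $\{a_0,a_1,b_0,b_1\}$, $\{a_0,a_1,b_1,b_2\}$, $\{a_0,a_1,b_2,b_3\}$, $\{a_0,a_1,b_3,b_0\}$, $\{a_0,a_1,b_0,b_2\}$, $\{a_0,a_1,b_1,b_3\}$, $\{a_0,a_2,b_0,b_1\}$, $\{a_0,a_2,b_1,b_2\}$, $\{a_0,a_2,b_2,b_3\}$, $\{a_0,a_2,b_3,b_0\}$, $\{a_0,a_2,b_0,b_2\}$, $\{a_0,a_2,b_1,b_3\}$, $\{a_0,a_1,a_2,b_0\}$, $\{a_0,a_1,a_2,b_1\}$, $\{a_0,a_1,a_2,b_2\}$, $\{a_0,a_1,a_2,b_3\}$, $\{a_0,a_1,a_2,a_3\}$, $\{b_0,b_1,b_2,b_3\}$; $\Phi_6=\{C_m\setminus\beta:\beta\in\Phi_2\}$; $\Phi_8=\{C_m\}$. Couplings $J_\alpha\in\mathbb R$ ($\alpha\in\Phi$), independent of $m$. $\mathcal H^m=-\sum_{\alpha\in\Phi}J_\alpha\sum_{r=0}^3\sigma_{\rho^r(\alpha)}$, $\mathcal H=\sum_{m=0}^{M-1}\mathcal H^m$. Percolation: a configuration is a percolation configuration if for some $m\in\{0,\dots,M-1\}$ one of $\sigma_0^m=\sigma_1^m=-1$, $\sigma_1^m=\sigma_2^m=-1$, $\sigma_2^m=\sigma_3^m=-1$,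 $\sigma_3^m=\sigma_0^m=-1$ holds; otherwise it is a non-percolation configuration. Transfer matrices: index a layer state $(s_0,\dots,s_3)\in\{-1,1\}^4$ by $k=1+\sum_{i=0}^3 2^i(1-s_i)/2$. $\theta_{k,l}=\exp(-\mathcal H^m/(k_BT))$ with layer $m$ in state $k$ and layer $m+1$ in state $l$. $\tau$ is $4\times4$ with $\tau_{i,j}=\sum_{l\in G_j}\theta_{r_i,l}$, $(r_1,\dots,r_4)=(1,2,4,6)$, $G_1=\{1,16\}$, $G_2=\{2,3,5,8,9,12,14,15\}$, $G_3=\{4,7,10,13\}$, $G_4=\{6,11\}$. $\tau'$ is $3\times3$ with $\tau'_{i,j}=\sum_{l\in G'_j}\theta_{r'_i,l}$, $(r'_1,r'_2,r'_3)=(1,2,6)$, $G'_1=\{1\}$, $G'_2=\{2,3,5,9\}$, $G'_3=\{6,11\}$. *)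

theory Defs
  imports Complex_Main "Jordan_Normal_Form.Char_Poly"
begin

text \<open>Sites of the elementary cell C_m: A i stands for a_i = t_i^m, B i for b_i = t_i^(m+1),
  with i in {0,1,2,3}.\<close>
datatype site = A nat | B nat

definition cellC :: "site set" where
  "cellC = {A 0, A 1, A 2, A 3, B 0, B 1, B 2, B 3}"

fun rho :: "site \<Rightarrow> site" where
  "rho (A i) = A ((i + 1) mod 4)"
| "rho (B i) = B ((i + 1) mod 4)"

definition Phi2 :: "site set set" where
  "Phi2 = {{A 0, A 1}, {A 0, A 2}, {B 0, B 1}, {B 0, B 2},
           {A 0, B 0}, {A 0, B 1}, {A 0, B 2}, {A 0, B 3}}"

definition Phi4 :: "site set set" where
  "Phi4 = {{A 0, B 0, B 1, B 2}, {A 0, B 1, B 2, B 3}, {A 0, B 2, B 3, B 0}, {A 0, B 3, B 0, B 1},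
           {A 0, A 1, B 0, B 1}, {A 0, A 1, B 1, B 2}, {A 0, A 1, B 2, B 3}, {A 0, A 1, B 3, B 0},
           {A 0, A 1, B 0, B 2}, {A 0, A 1, B 1, B 3},
           {A 0, A 2, B 0, B 1}, {A 0, A 2, B 1, B 2}, {A 0, A 2, B 2, B 3}, {A 0, A 2, B 3, B 0},
           {A 0, A 2, B 0, B 2}, {A 0, A 2, B 1, B 3},
           {A 0, A 1, A 2, B 0}, {A 0, A 1, A 2, B 1}, {A 0, A 1, A 2, B 2}, {A 0, A 1, A 2, B 3},
           {A 0, A 1, A 2, A 3}, {B 0, B 1, B 2, B 3}}"

definition Phi6 :: "site set set" where
  "Phi6 = (\<lambda>\<beta>. cellC - \<beta>) ` Phi2"

definition Phi8 :: "site set set" where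
  "Phi8 = {cellC}"

definition Phi :: "site set set" where
  "Phi = Phi2 \<union> Phi4 \<union> Phi6 \<union> Phi8"

text \<open>A layer state: s i is the spin sigma_i of the layer, i < 4.
  spin s s' x is the spin at site x when layer m is in state s and layer m+1 in state s'.\<close>
fun spin :: "(nat \<Rightarrow> int) \<Rightarrow> (nat \<Rightarrow> int) \<Rightarrow> site \<Rightarrow> int" where
  "spin s s' (A i) = s i"
| "spin s s' (B i) = s' i"

definition spinprod :: "(nat \<Rightarrow> int) \<Rightarrow> (nat \<Rightarrow> int) \<Rightarrow> site set \<Rightarrow> int" where
  "spinprod s s' \<Omega> = (\<Prod>x\<in>\<Omega>. spin s s' x)"

definition Hlayer :: "(site set \<Rightarrow> real) \<Rightarrow> (nat \<Rightarrow> int) \<Rightarrow> (nat \<Rightarrow> int) \<Rightarrow> real" where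
  "Hlayer J s s' = - (\<Sum>\<alpha>\<in>Phi. J \<alpha> * (\<Sum>r<4::nat. real_of_int (spinprod s s' ((rho ^^ r) ` \<alpha>))))"

text \<open>Spin configurations of the 2x2xM lattice: sigma m i = sigma_i^m for m < M, i < 4,
  normalised to 1 outside the lattice (so the set is in bijection with {-1,1}^(4M)).\<close>
definition configs :: "nat \<Rightarrow> (nat \<Rightarrow> nat \<Rightarrow> int) set" where
  "configs M = {\<sigma>. (\<forall>m<M. \<forall>i<4. \<sigma> m i \<in> {-1, 1}) \<and> (\<forall>m i. (M \<le> m \<or> 4 \<le> i) \<longrightarrow> \<sigma> m i = 1)}"

definition Htot :: "(site set \<Rightarrow> real) \<Rightarrow> nat \<Rightarrow> (nat \<Rightarrow> nat \<Rightarrow> int) \<Rightarrow> real" where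
  "Htot J M \<sigma> = (\<Sum>m<M. Hlayer J (\<sigma> m) (\<sigma> ((m + 1) mod M)))"

definition percolation :: "nat \<Rightarrow> (nat \<Rightarrow> nat \<Rightarrow> int) \<Rightarrow> bool" where
  "percolation M \<sigma> = (\<exists>m<M. \<exists>i<4. \<sigma> m i = -1 \<and> \<sigma> m ((i + 1) mod 4) = -1)"

definition Z :: "(site set \<Rightarrow> real) \<Rightarrow> real \<Rightarrow> real \<Rightarrow> nat \<Rightarrow> real" where
  "Z J kB T M = (\<Sum>\<sigma>\<in>configs M. exp (- Htot J M \<sigma> / (kB * T)))"

definition Z' :: "(site set \<Rightarrow> real) \<Rightarrow> real \<Rightarrow> real \<Rightarrow> nat \<Rightarrow> real" where
  "Z' J kB T M = (\<Sum>\<sigma>\<in>{\<sigma>\<in>configs M. \<not> percolation M \<sigma>}. exp (- Htot J M \<sigma> / (kB * T)))"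

definition Pnp :: "(site set \<Rightarrow> real) \<Rightarrow> real \<Rightarrow> real \<Rightarrow> nat \<Rightarrow> real" where
  "Pnp J kB T M = Z' J kB T M / Z J kB T M"

text \<open>Layer state with index k (1..16): k = 1 + sum_i 2^i (1 - s_i)/2.\<close>
definition state :: "nat \<Rightarrow> nat \<Rightarrow> int" where
  "state k i = (if i < 4 then 1 - 2 * int (((k - 1) div 2 ^ i) mod 2) else 1)"

definition theta :: "(site set \<Rightarrow> real) \<Rightarrow> real \<Rightarrow> real \<Rightarrow> nat \<Rightarrow> nat \<Rightarrow> real" where
  "theta J kB T k l = exp (- Hlayer J (state k) (state l) / (kB * T))"

text \<open>Matrices use 0-based indices: entry (i,j) here is entry (i+1,j+1) in the paper.\<close>
definition tau :: "(site set \<Rightarrow> real) \<Rightarrow> real \<Rightarrow> real \<Rightarrow> real mat" where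
  "tau J kB T = mat 4 4 (\<lambda>(i, j).
     (\<Sum>l\<in>[{1, 16}, {2, 3, 5, 8, 9, 12, 14, 15}, {4, 7, 10, 13}, {6, 11}] ! j.
        theta J kB T ([1, 2, 4, 6] ! i) l))"

definition tau' :: "(site set \<Rightarrow> real) \<Rightarrow> real \<Rightarrow> real \<Rightarrow> real mat" where
  "tau' J kB T = mat 3 3 (\<lambda>(i, j).
     (\<Sum>l\<in>[{1}, {2, 3, 5, 9}, {6, 11}] ! j.
        theta J kB T ([1, 2, 6] ! i) l))"

definition largest_real_root :: "real mat \<Rightarrow> real" where
  "largest_real_root Q = Max {x. poly (char_poly Q) x = 0}"

end

theory Submission
  imports Defs "HOL-Analysis.Analysis"
begin

text \<open>
  Z_M and Z'_M are traces of M-th powers of the layer transfer matrix theta, restricted to all 16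
  layer states and to the 7 non-percolating ones respectively. The Hamiltonian is invariant under
  rotating the layers and (on all states) flipping every spin, so the restricted matrices are
  lumpable to tau and tau'. A positive eigenvector of tau (Perron, via Brouwer's fixed point
  theorem) lifts to a positive eigenvector of theta with the same eigenvalue; as no real eigenvalue
  of a nonnegative matrix exceeds one with a positive eigenvector, that eigenvalue is lambda_max.
  A positive eigenvector squeezes the trace of the M-th power of a positive matrix between constant
  multiples of lambda_max^M, hence ln Z_M / M tends to ln lambda_max; likewise ln Z'_M / M tends
  to ln mu_max.
\<close>

section \<open>Perron eigenvectors of positive matrices\<close>

definition prob_simplex :: "(real^'n::finite) set" where
  "prob_simplex = {x. (\<forall>i. 0 \<le> vec_nth x i) \<and> (\<Sum>i\<in>UNIV. vec_nth x i) = 1}"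

lemma compact_prob_simplex: "compact (prob_simplex :: (real^'n::finite) set)"
proof (rule compact_eq_bounded_closed[THEN iffD2], rule conjI)
  have "norm x \<le> 1" if "x \<in> prob_simplex" for x
    using norm_le_l1_cart[of x] that by (simp add: prob_simplex_def)
  then show "bounded prob_simplex"
    unfolding bounded_iff by blast
  show "closed prob_simplex"
    unfolding prob_simplex_def
    by (intro closed_Collect_conj closed_Collect_all closed_Collect_le closed_Collect_eq
        continuous_intros)
qed

lemma convex_prob_simplex: "convex prob_simplex"
  unfolding convex_def prob_simplex_def by (auto simp: sum.distrib sum_distrib_left[symmetric])

lemma prob_simplex_nonempty: "(prob_simplex :: (real^'n::finite) set) \<noteq> {}"
proof -
  have "(\<chi> i. 1 / real CARD('n)) \<in> (prob_simplex :: (real^'n) set)"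
    by (simp add: prob_simplex_def)
  then show ?thesis
    by blast
qed

text \<open>Perron's theorem, existence part: a fixed point of x \<mapsto> A x / (sum of A x) on the simplex,
  provided by Brouwer's theorem, is a positive eigenvector.\<close>

lemma positive_matrix_positive_eigenvector:
  fixes A :: "'n::finite \<Rightarrow> 'n \<Rightarrow> real"
  assumes A_pos: "\<And>i j. A i j > 0"
  shows "\<exists>c v. c > 0 \<and> (\<forall>i. v i > 0) \<and> (\<forall>i. (\<Sum>j\<in>UNIV. A i j * v j) = c * v i)"
proof -
  define L where "L x = (\<chi> i. \<Sum>j\<in>UNIV. A i j * vec_nth x j)" for x :: "real^'n"
  define D where "D x = (\<Sum>i\<in>UNIV. vec_nth (L x) i)" for x
  have L_pos: "vec_nth (L x) i > 0" if x: "x \<in> prob_simplex" for x i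
  proof -
    obtain j where "vec_nth x j \<noteq> 0"
      using x by (force simp: prob_simplex_def)
    then have "vec_nth x j > 0"
      using x by (simp add: prob_simplex_def order_less_le)
    then have "0 < (\<Sum>j\<in>UNIV. A i j * vec_nth x j)"
      using x A_pos by (intro sum_pos2[of _ j]) (auto simp: prob_simplex_def less_imp_le)
    then show ?thesis
      by (simp add: L_def)
  qed
  have D_pos: "D x > 0" if "x \<in> prob_simplex" for x
    unfolding D_def using L_pos[OF that] by (intro sum_pos) auto
  have "continuous_on prob_simplex (\<lambda>x. inverse (D x) *\<^sub>R L x)"
  proof -
    have "continuous_on prob_simplex L"
      unfolding L_def by (intro continuous_intros)
    moreover from this have "continuous_on prob_simplex D"
      unfolding D_def by (intro continuous_intros)
    moreover have "\<forall>x\<in>prob_simplex. D x \<noteq> 0"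
      using D_pos by force
    ultimately show ?thesis
      by (intro continuous_intros)
  qed
  moreover have "inverse (D x) *\<^sub>R L x \<in> prob_simplex" if "x \<in> prob_simplex" for x
  proof -
    have "(\<Sum>i\<in>UNIV. vec_nth (inverse (D x) *\<^sub>R L x) i) = inverse (D x) * D x"
      by (simp add: D_def sum_distrib_left)
    then show ?thesis
      using D_pos[OF that] L_pos[OF that] by (simp add: prob_simplex_def less_imp_le)
  qed
  ultimately obtain x where x: "x \<in> prob_simplex" "inverse (D x) *\<^sub>R L x = x"
    using brouwer[OF compact_prob_simplex convex_prob_simplex prob_simplex_nonempty] by blast
  have eigen: "vec_nth (L x) i = D x * vec_nth x i" for i
  proof -
    have "vec_nth x i = inverse (D x) * vec_nth (L x) i"
      by (subst (1) x(2)[symmetric]) simp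
    then show ?thesis
      using D_pos[OF x(1)] by (simp add: field_simps)
  qed
  show ?thesis
  proof (intro exI conjI allI)
    show "D x > 0"
      using D_pos[OF x(1)] .
    show "vec_nth x i > 0" for i
      using D_pos[OF x(1)] L_pos[OF x(1), of i] eigen[of i] by (simp add: zero_less_mult_iff)
    show "(\<Sum>j\<in>UNIV. A i j * vec_nth x j) = D x * vec_nth x i" for i
      using eigen[of i] by (simp add: L_def)
  qed
qed

text \<open>The type 'n only provides an index space of size n, so that Brouwer's theorem in real^'n
  applies to matrices of the Jordan_Normal_Form library.\<close>

lemma positive_mat_positive_eigenvector:
  fixes Q :: "real mat"
  assumes n: "CARD('n::finite) = n"
    and Q_pos: "\<And>i j. i < n \<Longrightarrow> j < n \<Longrightarrow> Q $$ (i, j) > 0"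
  shows "\<exists>c w. c > 0 \<and> (\<forall>i<n. w i > 0) \<and> (\<forall>i<n. (\<Sum>j<n. Q $$ (i, j) * w j) = c * w i)"
proof -
  obtain h :: "nat \<Rightarrow> 'n" where h: "bij_betw h {..<n} UNIV"
    using ex_bij_betw_nat_finite[of "UNIV :: 'n set"] n by (auto simp: atLeast0LessThan)
  define g where "g = inv_into {..<n} h"
  have g_less: "g i < n" for i
    using h unfolding g_def bij_betw_def by (metis UNIV_I inv_into_into lessThan_iff)
  have g_h: "g (h j) = j" if "j < n" for j
    using h that by (simp add: g_def bij_betw_def)
  have "Q $$ (g i, g j) > 0" for i j
    using Q_pos g_less by blast
  then obtain c v where c: "c > 0" and v: "\<And>i. v i > 0"
    and eigen: "\<And>i. (\<Sum>j\<in>UNIV. Q $$ (g i, g j) * v j) = c * v i"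
    using positive_matrix_positive_eigenvector[of "\<lambda>i j. Q $$ (g i, g j)"] by blast
  have "(\<Sum>j<n. Q $$ (i, j) * v (h j)) = c * v (h i)" if "i < n" for i
  proof -
    have "(\<Sum>j<n. Q $$ (i, j) * v (h j)) = (\<Sum>j<n. Q $$ (g (h i), g (h j)) * v (h j))"
      using that by (intro sum.cong) (simp_all add: g_h)
    also have "\<dots> = (\<Sum>j\<in>UNIV. Q $$ (g (h i), g j) * v j)"
      by (rule sum.reindex_bij_betw[OF h])
    finally show ?thesis
      using eigen[of "h i"] by simp
  qed
  with c v show ?thesis
    by (intro exI[of _ c] exI[of _ "\<lambda>j. v (h j)"]) simp
qed

lemma abs_eigenvalue_le_positive_eigenvalue:
  fixes Q :: "real mat"
  assumes Q: "Q \<in> carrier_mat n n"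
    and Q_nonneg: "\<And>i j. i < n \<Longrightarrow> j < n \<Longrightarrow> Q $$ (i, j) \<ge> 0"
    and w_pos: "\<And>i. i < n \<Longrightarrow> w i > 0"
    and w_eigen: "\<And>i. i < n \<Longrightarrow> (\<Sum>j<n. Q $$ (i, j) * w j) = c * w i"
    and "eigenvalue Q x"
  shows "\<bar>x\<bar> \<le> c"
proof -
  obtain y where y: "y \<in> carrier_vec n" "y \<noteq> 0\<^sub>v n" "Q *\<^sub>v y = x \<cdot>\<^sub>v y"
    using \<open>eigenvalue Q x\<close> Q unfolding eigenvalue_def eigenvector_def by auto
  have y_eigen: "x * vec_index y i = (\<Sum>j<n. Q $$ (i, j) * vec_index y j)" if "i < n" for i
    using arg_cong[OF y(3), of "\<lambda>u. vec_index u i"] that Q y(1)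
    by (simp add: scalar_prod_def atLeast0LessThan)
  obtain k where k: "k < n" "vec_index y k \<noteq> 0"
    using y(1,2) by (metis carrier_vecD eq_vecI index_zero_vec(1,2))
  define t where "t = Max ((\<lambda>i. \<bar>vec_index y i\<bar> / w i) ` {..<n})"
  have y_le: "\<bar>vec_index y j\<bar> \<le> t * w j" if "j < n" for j
  proof -
    have "\<bar>vec_index y j\<bar> / w j \<le> t"
      unfolding t_def using that by (intro Max_ge) auto
    then show ?thesis
      using w_pos[OF that] by (simp add: divide_le_eq)
  qed
  obtain i where i: "i < n" "\<bar>vec_index y i\<bar> = t * w i"
  proof -
    have "t \<in> (\<lambda>i. \<bar>vec_index y i\<bar> / w i) ` {..<n}"
      unfolding t_def using k(1) by (intro Max_in) auto
    then show ?thesis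
      using that w_pos by fastforce
  qed
  have "0 < t * w k"
    using k(2) y_le[OF k(1)] by linarith
  then have t_w_pos: "t * w i > 0"
    using w_pos[OF k(1)] w_pos[OF i(1)] by (simp add: zero_less_mult_iff)
  have "\<bar>x\<bar> * (t * w i) = \<bar>x * vec_index y i\<bar>"
    using i(2) by (simp add: abs_mult)
  also have "\<dots> = \<bar>\<Sum>j<n. Q $$ (i, j) * vec_index y j\<bar>"
    using y_eigen[OF i(1)] by simp
  also have "\<dots> \<le> (\<Sum>j<n. Q $$ (i, j) * (t * w j))"
    using Q_nonneg i(1) y_le
    by (intro order_trans[OF sum_abs] sum_mono) (simp add: abs_mult mult_left_mono)
  also have "\<dots> = c * (t * w i)"
    using w_eigen[OF i(1)] by (simp add: sum_distrib_left[symmetric] mult.left_commute)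
  finally show ?thesis
    using t_w_pos by (simp only: mult_le_cancel_right_pos)
qed

lemma largest_real_root_eq_positive_eigenvalue:
  fixes Q :: "real mat"
  assumes Q: "Q \<in> carrier_mat n n" and "n > 0"
    and Q_nonneg: "\<And>i j. i < n \<Longrightarrow> j < n \<Longrightarrow> Q $$ (i, j) \<ge> 0"
    and w_pos: "\<And>i. i < n \<Longrightarrow> w i > 0"
    and w_eigen: "\<And>i. i < n \<Longrightarrow> (\<Sum>j<n. Q $$ (i, j) * w j) = c * w i"
  shows "largest_real_root Q = c"
proof -
  have "eigenvector Q (Matrix.vec n w) c"
  proof -
    have "Matrix.vec n w \<noteq> 0\<^sub>v n"
      using w_pos[OF \<open>n > 0\<close>] \<open>n > 0\<close> by (metis index_vec index_zero_vec(1) less_irrefl)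
    moreover have "Q *\<^sub>v Matrix.vec n w = c \<cdot>\<^sub>v Matrix.vec n w"
      using Q w_eigen by (intro eq_vecI) (auto simp: scalar_prod_def atLeast0LessThan)
    ultimately show ?thesis
      using Q by (auto simp: eigenvector_def)
  qed
  then have "poly (char_poly Q) c = 0"
    using eigenvalue_root_char_poly[OF Q] by (auto simp: eigenvalue_def)
  moreover have "x \<le> c" if "poly (char_poly Q) x = 0" for x
    using abs_eigenvalue_le_positive_eigenvalue[OF Q Q_nonneg w_pos w_eigen, of x] that
      eigenvalue_root_char_poly[OF Q] by simp
  moreover have "finite {x. poly (char_poly Q) x = 0}"
    using degree_monic_char_poly[OF Q] by (intro poly_roots_finite) auto
  ultimately show ?thesis
    unfolding largest_real_root_def by (intro Max_eqI) auto
qed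

lemma largest_real_root_positive_mat:
  fixes Q :: "real mat"
  assumes n: "CARD('n::finite) = n" and Q: "Q \<in> carrier_mat n n"
    and Q_pos: "\<And>i j. i < n \<Longrightarrow> j < n \<Longrightarrow> Q $$ (i, j) > 0"
  shows "largest_real_root Q > 0"
    and "\<exists>w. (\<forall>i<n. w i > 0) \<and> (\<forall>i<n. (\<Sum>j<n. Q $$ (i, j) * w j) = largest_real_root Q * w i)"
proof -
  obtain c w where c: "c > 0" and w: "\<forall>i<n. w i > 0" "\<forall>i<n. (\<Sum>j<n. Q $$ (i, j) * w j) = c * w i"
    using positive_mat_positive_eigenvector[OF n Q_pos] by blast
  have "n > 0"
    using n by auto
  then have "largest_real_root Q = c"
    using Q_pos w
    by (intro largest_real_root_eq_positive_eigenvalue[OF Q, of w]) (auto intro: less_imp_le)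
  with c w show "largest_real_root Q > 0"
    and "\<exists>w. (\<forall>i<n. w i > 0) \<and> (\<forall>i<n. (\<Sum>j<n. Q $$ (i, j) * w j) = largest_real_root Q * w i)"
    by auto
qed

section \<open>Growth of closed walk sums\<close>

definition closed_walk_sum :: "('a \<Rightarrow> 'a \<Rightarrow> real) \<Rightarrow> 'a set \<Rightarrow> nat \<Rightarrow> real" where
  "closed_walk_sum W S M = (\<Sum>f\<in>PiE {..<M} (\<lambda>_. S). \<Prod>m<M. W (f m) (f ((m + 1) mod M)))"

lemma sum_PiE_lessThan_Suc:
  "(\<Sum>f\<in>PiE {..<Suc n} (\<lambda>_. S). F f) = (\<Sum>x\<in>S. \<Sum>g\<in>PiE {..<n} (\<lambda>_. S). F (g(n := x)))"
proof -
  have "PiE {..<Suc n} (\<lambda>_. S) = (\<lambda>(x, g). g(n := x)) ` (S \<times> PiE {..<n} (\<lambda>_. S))"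
    using PiE_insert_eq[of n "{..<n}" "\<lambda>_. S"] by (simp add: lessThan_Suc)
  moreover have "inj_on (\<lambda>(x, g). g(n := x)) (S \<times> PiE {..<n} (\<lambda>_. S))"
    using inj_combinator[of n "{..<n}" "\<lambda>_. S"] by simp
  ultimately have "(\<Sum>f\<in>PiE {..<Suc n} (\<lambda>_. S). F f)
      = (\<Sum>p\<in>S \<times> PiE {..<n} (\<lambda>_. S). (F \<circ> (\<lambda>(x, g). g(n := x))) p)"
    by (simp only: sum.reindex)
  then show ?thesis
    by (simp add: sum.cartesian_product comp_def split_def)
qed

lemma sum_open_walks_eigenvector:
  fixes W :: "'a \<Rightarrow> 'a \<Rightarrow> real"
  assumes eigen: "\<And>x. x \<in> S \<Longrightarrow> (\<Sum>y\<in>S. W x y * v y) = \<rho> * v x"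
  shows "(\<Sum>f\<in>PiE {..<Suc n} (\<lambda>_. S). (\<Prod>m<n. W (f m) (f (Suc m))) * v (f n))
           = \<rho> ^ n * (\<Sum>x\<in>S. v x)"
proof (induction n)
  case 0
  then show ?case
    by (simp add: sum_PiE_lessThan_Suc)
next
  case (Suc n)
  have "(\<Sum>f\<in>PiE {..<Suc (Suc n)} (\<lambda>_. S). (\<Prod>m<Suc n. W (f m) (f (Suc m))) * v (f (Suc n)))
      = (\<Sum>x\<in>S. \<Sum>g\<in>PiE {..<Suc n} (\<lambda>_. S). (\<Prod>m<n. W (g m) (g (Suc m))) * W (g n) x * v x)"
    by (simp add: sum_PiE_lessThan_Suc prod.lessThan_Suc)
  also have "\<dots> = (\<Sum>g\<in>PiE {..<Suc n} (\<lambda>_. S). (\<Prod>m<n. W (g m) (g (Suc m))) * (\<Sum>x\<in>S. W (g n) x * v x))"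
    by (subst sum.swap) (simp add: sum_distrib_left mult.assoc)
  also have "\<dots> = (\<Sum>g\<in>PiE {..<Suc n} (\<lambda>_. S). (\<Prod>m<n. W (g m) (g (Suc m))) * (\<rho> * v (g n)))"
    by (intro sum.cong refl) (simp add: eigen PiE_iff)
  also have "\<dots> = \<rho> * (\<Sum>g\<in>PiE {..<Suc n} (\<lambda>_. S). (\<Prod>m<n. W (g m) (g (Suc m))) * v (g n))"
    by (simp add: sum_distrib_left mult.left_commute)
  finally show ?case
    by (simp add: Suc.IH)
qed

lemma ln_div_tendsto_of_geometric_bounds:
  fixes G :: "nat \<Rightarrow> real"
  assumes "a > 0" "\<rho> > 0"
    and bounds: "eventually (\<lambda>n. a * \<rho> ^ n \<le> G n \<and> G n \<le> b * \<rho> ^ n) sequentially"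
  shows "(\<lambda>n. ln (G n) / real n) \<longlonglongrightarrow> ln \<rho>"
proof (rule tendsto_sandwich)
  have "(\<lambda>n. c / real n + ln \<rho>) \<longlonglongrightarrow> ln \<rho>" for c
    using tendsto_add[OF lim_const_over_n[of c] tendsto_const[of "ln \<rho>"]] by simp
  then show "(\<lambda>n. ln a / real n + ln \<rho>) \<longlonglongrightarrow> ln \<rho>" "(\<lambda>n. ln b / real n + ln \<rho>) \<longlonglongrightarrow> ln \<rho>"
    by blast+
  have "ln a / real n + ln \<rho> \<le> ln (G n) / real n \<and> ln (G n) / real n \<le> ln b / real n + ln \<rho>"
    if "n \<ge> 1" "a * \<rho> ^ n \<le> G n" "G n \<le> b * \<rho> ^ n" for n
  proof -
    have "0 < a * \<rho> ^ n"
      using \<open>a > 0\<close> \<open>\<rho> > 0\<close> by simp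
    then have "0 < b * \<rho> ^ n"
      using that by linarith
    then have "0 < b"
      using \<open>\<rho> > 0\<close> by (simp add: zero_less_mult_iff)
    have "0 < G n"
      using that \<open>0 < a * \<rho> ^ n\<close> by linarith
    then have "ln (a * \<rho> ^ n) \<le> ln (G n)" "ln (G n) \<le> ln (b * \<rho> ^ n)"
      using that \<open>0 < a * \<rho> ^ n\<close> \<open>0 < b * \<rho> ^ n\<close> by simp_all
    then have "ln a + n * ln \<rho> \<le> ln (G n)" "ln (G n) \<le> ln b + n * ln \<rho>"
      using \<open>0 < b\<close> \<open>a > 0\<close> \<open>\<rho> > 0\<close> by (simp_all add: ln_mult ln_realpow)
    moreover have "ln c / real n + ln \<rho> = (ln c + n * ln \<rho>) / real n" for c
      using \<open>n \<ge> 1\<close> by (simp add: field_simps)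
    ultimately show ?thesis
      by (simp add: divide_right_mono)
  qed
  with bounds show "eventually (\<lambda>n. ln a / real n + ln \<rho> \<le> ln (G n) / real n) sequentially"
      "eventually (\<lambda>n. ln (G n) / real n \<le> ln b / real n + ln \<rho>) sequentially"
    by (auto elim!: eventually_mono[OF eventually_conj[OF eventually_ge_at_top[of 1]]])
qed

lemma closed_walk_sum_Suc:
  "closed_walk_sum W S (Suc n)
     = (\<Sum>f\<in>PiE {..<Suc n} (\<lambda>_. S). (\<Prod>m<n. W (f m) (f (Suc m))) * W (f n) (f 0))"
  unfolding closed_walk_sum_def by (intro sum.cong refl) (simp add: prod.lessThan_Suc)

lemma closed_walk_sum_pos:
  assumes "finite S" "S \<noteq> {}" "\<And>x y. x \<in> S \<Longrightarrow> y \<in> S \<Longrightarrow> W x y > 0"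
  shows "closed_walk_sum W S M > 0"
  unfolding closed_walk_sum_def using assms
  by (intro sum_pos prod_pos finite_PiE) (auto simp: PiE_eq_empty_iff PiE_iff)

lemma closed_walk_sum_Suc_bounds:
  fixes W :: "'a \<Rightarrow> 'a \<Rightarrow> real"
  assumes W_nonneg: "\<And>x y. x \<in> S \<Longrightarrow> y \<in> S \<Longrightarrow> W x y \<ge> 0"
    and eigen: "\<And>x. x \<in> S \<Longrightarrow> (\<Sum>y\<in>S. W x y * v y) = \<rho> * v x"
    and closing: "\<And>x y. x \<in> S \<Longrightarrow> y \<in> S \<Longrightarrow> a * v x \<le> W x y \<and> W x y \<le> b * v x"
  shows "a * \<rho> ^ n * (\<Sum>x\<in>S. v x) \<le> closed_walk_sum W S (Suc n)"
    and "closed_walk_sum W S (Suc n) \<le> b * \<rho> ^ n * (\<Sum>x\<in>S. v x)"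
proof -
  define P where "P f = (\<Prod>m<n. W (f m) (f (Suc m)))" for f :: "nat \<Rightarrow> 'a"
  have P: "P f \<ge> 0" "f n \<in> S" "f 0 \<in> S" if "f \<in> PiE {..<Suc n} (\<lambda>_. S)" for f
    using that W_nonneg by (auto simp: P_def PiE_iff intro!: prod_nonneg)
  have scaled: "c * \<rho> ^ n * (\<Sum>x\<in>S. v x) = (\<Sum>f\<in>PiE {..<Suc n} (\<lambda>_. S). P f * (c * v (f n)))" for c
  proof -
    have "(\<Sum>f\<in>PiE {..<Suc n} (\<lambda>_. S). P f * (c * v (f n)))
        = c * (\<Sum>f\<in>PiE {..<Suc n} (\<lambda>_. S). P f * v (f n))"
      by (simp add: sum_distrib_left mult.left_commute)
    also have "\<dots> = c * (\<rho> ^ n * (\<Sum>x\<in>S. v x))"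
      unfolding P_def by (simp only: sum_open_walks_eigenvector[OF eigen])
    finally show ?thesis
      by simp
  qed
  show "a * \<rho> ^ n * (\<Sum>x\<in>S. v x) \<le> closed_walk_sum W S (Suc n)"
    unfolding scaled closed_walk_sum_Suc P_def[symmetric]
    using P closing by (intro sum_mono mult_left_mono) auto
  show "closed_walk_sum W S (Suc n) \<le> b * \<rho> ^ n * (\<Sum>x\<in>S. v x)"
    unfolding scaled closed_walk_sum_Suc P_def[symmetric]
    using P closing by (intro sum_mono mult_left_mono) auto
qed

lemma positive_ratio_bounds:
  fixes W :: "'a \<Rightarrow> 'a \<Rightarrow> real"
  assumes "finite S" "S \<noteq> {}"
    and W_pos: "\<And>x y. x \<in> S \<Longrightarrow> y \<in> S \<Longrightarrow> W x y > 0"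
    and v_pos: "\<And>x. x \<in> S \<Longrightarrow> v x > 0"
  obtains a b where "a > 0" "\<And>x y. x \<in> S \<Longrightarrow> y \<in> S \<Longrightarrow> a * v x \<le> W x y \<and> W x y \<le> b * v x"
proof
  define R where "R = (\<lambda>(x, y). W x y / v x) ` (S \<times> S)"
  have R: "finite R" "R \<noteq> {}" "\<forall>r\<in>R. r > 0"
    using assms by (auto simp: R_def)
  then show "Min R > 0"
    by simp
  fix x y
  assume xy: "x \<in> S" "y \<in> S"
  then have "W x y / v x \<in> R"
    unfolding R_def by (intro image_eqI[of _ _ "(x, y)"]) auto
  then have "Min R \<le> W x y / v x" "W x y / v x \<le> Max R"
    using R(1) by simp_all
  then show "Min R * v x \<le> W x y \<and> W x y \<le> Max R * v x"
    using v_pos[OF xy(1)] by (simp add: pos_le_divide_eq pos_divide_le_eq)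
qed

text \<open>Bounding the closing factor of a closed walk by multiples of the eigenvector reduces closed
  walks to open walks, whose weighted sum is exactly a power of the eigenvalue.\<close>

lemma closed_walk_sum_growth:
  fixes W :: "'a \<Rightarrow> 'a \<Rightarrow> real"
  assumes S: "finite S" "S \<noteq> {}"
    and W_pos: "\<And>x y. x \<in> S \<Longrightarrow> y \<in> S \<Longrightarrow> W x y > 0"
    and v_pos: "\<And>x. x \<in> S \<Longrightarrow> v x > 0"
    and eigen: "\<And>x. x \<in> S \<Longrightarrow> (\<Sum>y\<in>S. W x y * v y) = \<rho> * v x"
  shows "(\<lambda>M. ln (closed_walk_sum W S M) / real M) \<longlonglongrightarrow> ln \<rho>"
proof -
  define V where "V = (\<Sum>x\<in>S. v x)"
  have "V > 0"
    unfolding V_def using S v_pos by (intro sum_pos) auto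
  obtain x0 where "x0 \<in> S"
    using S by blast
  have "\<rho> * v x0 > 0"
    using S W_pos v_pos \<open>x0 \<in> S\<close> by (simp flip: eigen add: sum_pos)
  then have "\<rho> > 0"
    using v_pos[OF \<open>x0 \<in> S\<close>] by (simp add: zero_less_mult_iff)
  obtain a b where "a > 0" and closing: "\<And>x y. x \<in> S \<Longrightarrow> y \<in> S \<Longrightarrow> a * v x \<le> W x y \<and> W x y \<le> b * v x"
    using positive_ratio_bounds[of S W v, OF S] W_pos v_pos by blast
  have W_nonneg: "\<And>x y. x \<in> S \<Longrightarrow> y \<in> S \<Longrightarrow> W x y \<ge> 0"
    using W_pos by (simp add: less_imp_le)
  note walk_bounds = closed_walk_sum_Suc_bounds[OF W_nonneg eigen closing, folded V_def]
  have "eventually (\<lambda>M. a * V / \<rho> * \<rho> ^ M \<le> closed_walk_sum W S M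
      \<and> closed_walk_sum W S M \<le> b * V / \<rho> * \<rho> ^ M) sequentially"
  proof (rule eventually_sequentiallyI[of 1])
    fix M :: nat
    assume "1 \<le> M"
    then obtain n where "M = Suc n"
      by (cases M) auto
    then show "a * V / \<rho> * \<rho> ^ M \<le> closed_walk_sum W S M
        \<and> closed_walk_sum W S M \<le> b * V / \<rho> * \<rho> ^ M"
      using walk_bounds[of n] \<open>\<rho> > 0\<close> by (simp add: mult_ac)
  qed
  moreover have "a * V / \<rho> > 0"
    using \<open>a > 0\<close> \<open>V > 0\<close> \<open>\<rho> > 0\<close> by simp
  ultimately show ?thesis
    using ln_div_tendsto_of_geometric_bounds[OF _ \<open>\<rho> > 0\<close>] by blast
qed

section \<open>Symmetries of the layer Hamiltonian\<close>

lemma funpow_in_invariant_set: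
  assumes "f ` X \<subseteq> X" "x \<in> X"
  shows "(f ^^ n) x \<in> X"
  using assms by (induction n) auto

definition rot_state :: "(nat \<Rightarrow> int) \<Rightarrow> nat \<Rightarrow> int" where
  "rot_state s i = (if i < 4 then s ((i + 1) mod 4) else s i)"

definition flip_state :: "(nat \<Rightarrow> int) \<Rightarrow> nat \<Rightarrow> int" where
  "flip_state s i = (if i < 4 then - s i else s i)"

lemma cellC_cases:
  assumes "y \<in> cellC"
  obtains "y = A 0" | "y = A 1" | "y = A 2" | "y = A 3"
    | "y = B 0" | "y = B 1" | "y = B 2" | "y = B 3"
  using assms unfolding cellC_def by blast

lemma Phi_subset_cellC: "\<alpha> \<in> Phi \<Longrightarrow> \<alpha> \<subseteq> cellC"
  unfolding Phi_def Phi2_def Phi4_def Phi6_def Phi8_def cellC_def by auto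

lemma even_card_Phi: "\<alpha> \<in> Phi \<Longrightarrow> even (card \<alpha>)"
proof -
  have Phi2: "card \<beta> = 2 \<and> \<beta> \<subseteq> cellC" if "\<beta> \<in> Phi2" for \<beta>
    using that unfolding Phi2_def cellC_def by auto
  have "card cellC = 8"
    unfolding cellC_def by simp
  then have "card (cellC - \<beta>) = 6" if "\<beta> \<in> Phi2" for \<beta>
    using Phi2[OF that] by (simp add: card_Diff_subset finite_subset[of _ cellC] cellC_def)
  moreover assume "\<alpha> \<in> Phi"
  ultimately show ?thesis
    using Phi2 \<open>card cellC = 8\<close>
    unfolding Phi_def Phi4_def Phi6_def Phi8_def by auto
qed

lemma rho_image_cellC: "rho ` cellC \<subseteq> cellC"
  unfolding cellC_def by auto

lemma funpow_rho_in_cellC: "y \<in> cellC \<Longrightarrow> (rho ^^ r) y \<in> cellC"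
  using funpow_in_invariant_set[OF rho_image_cellC] .

lemma inj_on_rho_cellC: "inj_on rho cellC"
  unfolding inj_on_def cellC_def by auto

lemma inj_on_funpow_rho_cellC: "inj_on (rho ^^ r) cellC"
proof (induction r)
  case (Suc r)
  have "inj_on (rho \<circ> (rho ^^ r)) cellC"
    using Suc funpow_rho_in_cellC
    by (intro comp_inj_on inj_on_subset[OF inj_on_rho_cellC]) auto
  then show ?case
    by (simp add: comp_def)
qed simp

lemma funpow_4_rho: "y \<in> cellC \<Longrightarrow> (rho ^^ 4) y = y"
proof -
  have "(rho ^^ 4) y = rho (rho (rho (rho y)))"
    by (simp add: numeral_eq_Suc)
  moreover assume "y \<in> cellC"
  ultimately show ?thesis
    unfolding cellC_def by auto
qed

lemma spinprod_rot_state: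
  assumes "\<beta> \<subseteq> cellC"
  shows "spinprod (rot_state s) (rot_state s') \<beta> = spinprod s s' (rho ` \<beta>)"
proof -
  have "spin (rot_state s) (rot_state s') y = spin s s' (rho y)" if "y \<in> cellC" for y
    using that by (elim cellC_cases) (simp_all add: rot_state_def)
  then show ?thesis
    using assms unfolding spinprod_def
    by (simp add: prod.reindex[OF inj_on_subset[OF inj_on_rho_cellC assms]] subset_iff)
qed

lemma spinprod_flip_state:
  assumes "\<beta> \<subseteq> cellC"
  shows "spinprod (flip_state s) (flip_state s') \<beta> = (-1) ^ card \<beta> * spinprod s s' \<beta>"
proof -
  have "spin (flip_state s) (flip_state s') y = (-1) * spin s s' y" if "y \<in> cellC" for y
    using that by (elim cellC_cases) (simp_all add: flip_state_def)
  then have "spinprod (flip_state s) (flip_state s') \<beta> = (\<Prod>y\<in>\<beta>. (-1) * spin s s' y)"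
    using assms unfolding spinprod_def by (intro prod.cong) auto
  then show ?thesis
    unfolding spinprod_def by (simp only: prod.distrib prod_constant)
qed

lemma Hlayer_rot_state: "Hlayer J (rot_state s) (rot_state s') = Hlayer J s s'"
proof -
  have "(\<Sum>r<4. real_of_int (spinprod (rot_state s) (rot_state s') ((rho ^^ r) ` \<alpha>)))
      = (\<Sum>r<4. real_of_int (spinprod s s' ((rho ^^ r) ` \<alpha>)))" if "\<alpha> \<in> Phi" for \<alpha>
  proof -
    have sub: "(rho ^^ r) ` \<alpha> \<subseteq> cellC" for r
      using Phi_subset_cellC[OF that] funpow_rho_in_cellC by auto
    have "(rho ^^ 4) ` \<alpha> = \<alpha>"
      using Phi_subset_cellC[OF that] funpow_4_rho by (force simp: image_iff)
    then show ?thesis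
      by (simp add: spinprod_rot_state[OF sub] image_comp numeral_eq_Suc)
  qed
  then show ?thesis
    unfolding Hlayer_def by simp
qed

lemma Hlayer_flip_state: "Hlayer J (flip_state s) (flip_state s') = Hlayer J s s'"
proof -
  have "spinprod (flip_state s) (flip_state s') ((rho ^^ r) ` \<alpha>) = spinprod s s' ((rho ^^ r) ` \<alpha>)"
    if "\<alpha> \<in> Phi" for \<alpha> r
  proof -
    have "card ((rho ^^ r) ` \<alpha>) = card \<alpha>"
      using inj_on_subset[OF inj_on_funpow_rho_cellC Phi_subset_cellC[OF that]] by (rule card_image)
    then show ?thesis
      using Phi_subset_cellC[OF that] funpow_rho_in_cellC even_card_Phi[OF that]
      by (subst spinprod_flip_state) auto
  qed
  then show ?thesis
    unfolding Hlayer_def by simp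
qed

text \<open>Stated with Suc rather than numerals so that the simplifier can evaluate iterates f ^^ i.\<close>

lemma ex_less_4_nat:
  "(\<exists>i<4::nat. P i) \<longleftrightarrow> P 0 \<or> P (Suc 0) \<or> P (Suc (Suc 0)) \<or> P (Suc (Suc (Suc 0)))"
  by (simp add: numeral_eq_Suc less_Suc_eq ex_disj_distrib conj_disj_distribR)

lemma ex_less_2_nat: "(\<exists>i<2::nat. P i) \<longleftrightarrow> P 0 \<or> P (Suc 0)"
  by (simp add: numeral_eq_Suc less_Suc_eq ex_disj_distrib conj_disj_distribR)

lemma atLeastAtMost_1_16: "{1..16::nat} = {1, 2, 3, 4, 5, 6, 7, 8, 9, 10, 11, 12, 13, 14, 15, 16}"
  by (simp add: Icc_eq_insert_lb_nat numeral_eq_Suc)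

lemma layer_index_cases:
  assumes "k \<in> {1..16::nat}"
  shows "k = 1 \<or> k = 2 \<or> k = 3 \<or> k = 4 \<or> k = 5 \<or> k = 6 \<or> k = 7 \<or> k = 8 \<or> k = 9 \<or> k = 10
    \<or> k = 11 \<or> k = 12 \<or> k = 13 \<or> k = 14 \<or> k = 15 \<or> k = 16"
  using assms unfolding atLeastAtMost_1_16 by simp

lemma less_4_cases: "(i::nat) < 4 \<Longrightarrow> i = 0 \<or> i = 1 \<or> i = 2 \<or> i = 3"
  by auto

text \<open>The index of a layer state is one plus the binary word with digits (1 - s i) / 2, so the
  rotation of the layer is a cyclic shift of the four digits and the spin flip is their complement.\<close>

definition rot_index :: "nat \<Rightarrow> nat" where
  "rot_index k = 1 + ((k - 1) div 2 + ((k - 1) mod 2) * 8)"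

definition flip_index :: "nat \<Rightarrow> nat" where
  "flip_index k = 17 - k"

lemma state_rot_index: "k \<in> {1..16} \<Longrightarrow> state (rot_index k) = rot_state (state k)"
proof (rule ext)
  fix i
  assume k: "k \<in> {1..16}"
  show "state (rot_index k) i = rot_state (state k) i"
  proof (cases "i < 4")
    case True
    then show ?thesis
      using layer_index_cases[OF k] less_4_cases[OF True]
      by (elim disjE) (simp_all add: state_def rot_index_def rot_state_def)
  qed (simp add: state_def rot_state_def)
qed

lemma state_flip_index: "k \<in> {1..16} \<Longrightarrow> state (flip_index k) = flip_state (state k)"
proof (rule ext)
  fix i
  assume k: "k \<in> {1..16}"
  show "state (flip_index k) i = flip_state (state k) i"
  proof (cases "i < 4")
    case True
    then show ?thesis
      using layer_index_cases[OF k] less_4_cases[OF True]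
      by (elim disjE) (simp_all add: state_def flip_index_def flip_state_def)
  qed (simp add: state_def flip_state_def)
qed

lemma theta_rot_index:
  "k \<in> {1..16} \<Longrightarrow> l \<in> {1..16} \<Longrightarrow> theta J kB T (rot_index k) (rot_index l) = theta J kB T k l"
  by (simp add: theta_def state_rot_index Hlayer_rot_state)

lemma theta_flip_index:
  "k \<in> {1..16} \<Longrightarrow> l \<in> {1..16} \<Longrightarrow> theta J kB T (flip_index k) (flip_index l) = theta J kB T k l"
  by (simp add: theta_def state_flip_index Hlayer_flip_state)

lemma rot_index_image: "rot_index ` {1..16} \<subseteq> {1..16}"
  by (auto simp: rot_index_def)

lemma flip_index_image: "flip_index ` {1..16} \<subseteq> {1..16}"
  by (auto simp: flip_index_def)

section \<open>Lumping the transfer matrix\<close>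

lemma lumped_eigenvector:
  fixes W :: "'a \<Rightarrow> 'a \<Rightarrow> real" and Q :: "nat \<Rightarrow> nat \<Rightarrow> real"
  assumes "finite X" and cls: "cls ` X \<subseteq> {..<n}"
    and lumpable: "\<And>k j. k \<in> X \<Longrightarrow> j < n \<Longrightarrow> (\<Sum>l\<in>{l\<in>X. cls l = j}. W k l) = Q (cls k) j"
    and eigen: "\<And>i. i < n \<Longrightarrow> (\<Sum>j<n. Q i j * w j) = c * w i"
    and "k \<in> X"
  shows "(\<Sum>l\<in>X. W k l * w (cls l)) = c * w (cls k)"
proof -
  have "(\<Sum>l\<in>X. W k l * w (cls l)) = (\<Sum>j<n. \<Sum>l\<in>{l\<in>X. cls l = j}. W k l * w (cls l))"
    using sum.group[OF \<open>finite X\<close> finite_lessThan cls, of "\<lambda>l. W k l * w (cls l)"] by simp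
  also have "\<dots> = (\<Sum>j<n. (\<Sum>l\<in>{l\<in>X. cls l = j}. W k l) * w j)"
    by (simp add: sum_distrib_right)
  also have "\<dots> = (\<Sum>j<n. Q (cls k) j * w j)"
    using \<open>k \<in> X\<close> by (simp add: lumpable)
  also have "\<dots> = c * w (cls k)"
    using cls \<open>k \<in> X\<close> by (intro eigen) auto
  finally show ?thesis .
qed

lemma sum_row_funpow_invariant:
  assumes g_X: "g ` X \<subseteq> X"
    and f_g: "\<And>k l. k \<in> X \<Longrightarrow> l \<in> X \<Longrightarrow> f (g k) (g l) = f k l"
    and G: "G \<subseteq> X" "bij_betw g G G" and "k \<in> X"
  shows "(\<Sum>l\<in>G. f ((g ^^ a) k) l) = (\<Sum>l\<in>G. f k l)"
proof (induction a)
  case (Suc a)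
  have "(g ^^ a) k \<in> X"
    using funpow_in_invariant_set[OF g_X \<open>k \<in> X\<close>] .
  then have "(\<Sum>l\<in>G. f (g ((g ^^ a) k)) l) = (\<Sum>l\<in>G. f (g ((g ^^ a) k)) (g l))"
    using sum.reindex_bij_betw[OF G(2)] by metis
  also have "\<dots> = (\<Sum>l\<in>G. f ((g ^^ a) k) l)"
    using \<open>(g ^^ a) k \<in> X\<close> G(1) by (intro sum.cong) (auto simp: f_g)
  finally show ?case
    by (simp add: Suc.IH)
qed simp

text \<open>The groups G_j of the paper are the orbits of the layer states under rotation and global
  spin flip (for tau', the orbits of the non-percolating states under rotation), so the row sums of
  theta over a group depend only on the orbit of the row: theta is lumpable to tau and tau'.\<close>

definition tau_classes :: "nat set list" where
  "tau_classes = [{1, 16}, {2, 3, 5, 8, 9, 12, 14, 15}, {4, 7, 10, 13}, {6, 11}]"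

definition tau_reps :: "nat list" where
  "tau_reps = [1, 2, 4, 6]"

definition tau_class :: "nat \<Rightarrow> nat" where
  "tau_class k = (if k \<in> {1, 16} then 0 else if k \<in> {2, 3, 5, 8, 9, 12, 14, 15} then 1
     else if k \<in> {4, 7, 10, 13} then 2 else 3)"

lemma tau_entry:
  "i < 4 \<Longrightarrow> j < 4 \<Longrightarrow> tau J kB T $$ (i, j) = (\<Sum>l\<in>tau_classes ! j. theta J kB T (tau_reps ! i) l)"
  by (simp add: tau_def tau_classes_def tau_reps_def)

lemma tau_classes_props:
  assumes "j < 4"
  shows "tau_classes ! j \<subseteq> {1..16}" "tau_classes ! j \<noteq> {}"
    and "bij_betw rot_index (tau_classes ! j) (tau_classes ! j)"
    and "bij_betw flip_index (tau_classes ! j) (tau_classes ! j)"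
  using less_4_cases[OF assms]
  by (auto simp: tau_classes_def bij_betw_def inj_on_def rot_index_def flip_index_def)

lemma tau_class_fiber:
  assumes "j < 4"
  shows "{l \<in> {1..16}. tau_class l = j} = tau_classes ! j"
proof (intro equalityI subsetI)
  fix l
  assume "l \<in> {l \<in> {1..16}. tau_class l = j}"
  then have "l \<in> {1..16}" "j = tau_class l"
    by auto
  then show "l \<in> tau_classes ! j"
    by (elim layer_index_cases[elim_format] disjE) (simp_all add: tau_class_def tau_classes_def)
next
  fix l
  assume "l \<in> tau_classes ! j"
  then show "l \<in> {l \<in> {1..16}. tau_class l = j}"
    using less_4_cases[OF assms] by (auto simp: tau_classes_def tau_class_def)
qed

lemma tau_class_orbit:
  "k \<in> {1..16} \<Longrightarrow> \<exists>a<4. \<exists>b<2. k = (rot_index ^^ a) ((flip_index ^^ b) (tau_reps ! tau_class k))"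
  unfolding ex_less_4_nat ex_less_2_nat
  by (drule layer_index_cases)
    (elim disjE; simp add: tau_reps_def tau_class_def rot_index_def flip_index_def)


lemma theta_row_sum_funpow_rot_index:
  assumes "k \<in> {1..16}" "G \<subseteq> {1..16}" "bij_betw rot_index G G"
  shows "(\<Sum>l\<in>G. theta J kB T ((rot_index ^^ a) k) l) = (\<Sum>l\<in>G. theta J kB T k l)"
  using assms rot_index_image theta_rot_index
  by (intro sum_row_funpow_invariant[where X = "{1..16}"]) auto

lemma theta_row_sum_funpow_flip_index:
  assumes "k \<in> {1..16}" "G \<subseteq> {1..16}" "bij_betw flip_index G G"
  shows "(\<Sum>l\<in>G. theta J kB T ((flip_index ^^ b) k) l) = (\<Sum>l\<in>G. theta J kB T k l)"
  using assms flip_index_image theta_flip_index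
  by (intro sum_row_funpow_invariant[where X = "{1..16}"]) auto

lemma tau_lumpable:
  assumes k: "k \<in> {1..16}" and j: "j < 4"
  shows "(\<Sum>l\<in>{l\<in>{1..16}. tau_class l = j}. theta J kB T k l) = tau J kB T $$ (tau_class k, j)"
proof -
  define r where "r = tau_reps ! tau_class k"
  obtain a b where orbit: "k = (rot_index ^^ a) ((flip_index ^^ b) r)"
    using tau_class_orbit[OF k] unfolding r_def by blast
  have r: "r \<in> {1..16}" "tau_class k < 4"
    by (simp_all add: r_def tau_reps_def tau_class_def)
  have "(\<Sum>l\<in>tau_classes ! j. theta J kB T k l)
      = (\<Sum>l\<in>tau_classes ! j. theta J kB T ((flip_index ^^ b) r) l)"
    unfolding orbit using tau_classes_props[OF j] funpow_in_invariant_set[OF flip_index_image r(1)]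
    by (intro theta_row_sum_funpow_rot_index)
  also have "\<dots> = (\<Sum>l\<in>tau_classes ! j. theta J kB T r l)"
    using tau_classes_props[OF j] r by (intro theta_row_sum_funpow_flip_index)
  finally show ?thesis
    using tau_class_fiber[OF j] tau_entry[OF r(2) j] by (simp add: r_def)
qed

lemma theta_pos: "theta J kB T k l > 0"
  by (simp add: theta_def)

lemma tau_pos:
  assumes "i < 4" "j < 4"
  shows "tau J kB T $$ (i, j) > 0"
proof -
  have "finite (tau_classes ! j)"
    using tau_classes_props(1)[OF assms(2)] finite_subset by blast
  then show ?thesis
    using tau_classes_props(2)[OF assms(2)] by (simp add: tau_entry[OF assms] sum_pos theta_pos)
qed

definition nonpercolating_layers :: "nat set" where
  "nonpercolating_layers = {1, 2, 3, 5, 6, 9, 11}"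

definition tau'_classes :: "nat set list" where
  "tau'_classes = [{1}, {2, 3, 5, 9}, {6, 11}]"

definition tau'_reps :: "nat list" where
  "tau'_reps = [1, 2, 6]"

definition tau'_class :: "nat \<Rightarrow> nat" where
  "tau'_class k = (if k = 1 then 0 else if k \<in> {2, 3, 5, 9} then 1 else 2)"

lemma tau'_entry:
  "i < 3 \<Longrightarrow> j < 3 \<Longrightarrow> tau' J kB T $$ (i, j) = (\<Sum>l\<in>tau'_classes ! j. theta J kB T (tau'_reps ! i) l)"
  by (simp add: tau'_def tau'_classes_def tau'_reps_def)

lemma less_3_cases: "(i::nat) < 3 \<Longrightarrow> i = 0 \<or> i = 1 \<or> i = 2"
  by auto

lemma tau'_classes_props:
  assumes "j < 3"
  shows "tau'_classes ! j \<subseteq> {1..16}" "tau'_classes ! j \<noteq> {}"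
    and "bij_betw rot_index (tau'_classes ! j) (tau'_classes ! j)"
  using less_3_cases[OF assms]
  by (auto simp: tau'_classes_def bij_betw_def inj_on_def rot_index_def)

lemma tau'_class_fiber: "j < 3 \<Longrightarrow> {l \<in> nonpercolating_layers. tau'_class l = j} = tau'_classes ! j"
  unfolding nonpercolating_layers_def
  by (drule less_3_cases) (auto simp: tau'_classes_def tau'_class_def)

lemma tau'_class_orbit:
  "k \<in> nonpercolating_layers \<Longrightarrow> \<exists>a<4. k = (rot_index ^^ a) (tau'_reps ! tau'_class k)"
  unfolding ex_less_4_nat nonpercolating_layers_def
  by (elim insertE emptyE; simp add: tau'_reps_def tau'_class_def rot_index_def)

lemma tau'_lumpable:
  assumes k: "k \<in> nonpercolating_layers" and j: "j < 3"
  shows "(\<Sum>l\<in>{l\<in>nonpercolating_layers. tau'_class l = j}. theta J kB T k l)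
           = tau' J kB T $$ (tau'_class k, j)"
proof -
  define r where "r = tau'_reps ! tau'_class k"
  obtain a where orbit: "k = (rot_index ^^ a) r"
    using tau'_class_orbit[OF k] unfolding r_def by blast
  have r: "r \<in> {1..16}" "tau'_class k < 3"
    by (simp_all add: r_def tau'_reps_def tau'_class_def)
  have "(\<Sum>l\<in>tau'_classes ! j. theta J kB T k l) = (\<Sum>l\<in>tau'_classes ! j. theta J kB T r l)"
    unfolding orbit using tau'_classes_props[OF j] r by (intro theta_row_sum_funpow_rot_index)
  then show ?thesis
    using tau'_class_fiber[OF j] tau'_entry[OF r(2) j] by (simp add: r_def)
qed

lemma tau'_pos:
  assumes "i < 3" "j < 3"
  shows "tau' J kB T $$ (i, j) > 0"
proof -
  have "finite (tau'_classes ! j)"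
    using tau'_classes_props(1)[OF assms(2)] finite_subset by blast
  then show ?thesis
    using tau'_classes_props(2)[OF assms(2)] by (simp add: tau'_entry[OF assms] sum_pos theta_pos)
qed

section \<open>Partition functions as closed walk sums\<close>

definition state_index :: "(nat \<Rightarrow> int) \<Rightarrow> nat" where
  "state_index s = nat (1 + (1 - s 0) div 2 + (1 - s 1) + 2 * (1 - s 2) + 4 * (1 - s 3))"

lemma state_index_state: "k \<in> {1..16} \<Longrightarrow> state_index (state k) = k"
  by (drule layer_index_cases) (auto simp: state_index_def state_def)

lemma inj_on_state: "inj_on state {1..16}"
  by (metis inj_onI state_index_state)

lemma state_mem_image_iff: "k \<in> {1..16} \<Longrightarrow> X \<subseteq> {1..16} \<Longrightarrow> state k \<in> state ` X \<longleftrightarrow> k \<in> X"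
  using inj_on_image_mem_iff[OF inj_on_state] by blast

lemma state_image:
  "state ` {1..16} = {s. (\<forall>i<4. s i \<in> {-1, 1}) \<and> (\<forall>i. 4 \<le> i \<longrightarrow> s i = 1)}"
proof (intro equalityI subsetI)
  fix s
  assume "s \<in> state ` {1..16}"
  moreover have "((k - 1) div 2 ^ i) mod 2 = 0 \<or> ((k - 1) div 2 ^ i) mod 2 = 1" for k i :: nat
    by auto
  ultimately show "s \<in> {s. (\<forall>i<4. s i \<in> {-1, 1}) \<and> (\<forall>i. 4 \<le> i \<longrightarrow> s i = 1)}"
    by (auto simp: state_def)
next
  fix s :: "nat \<Rightarrow> int"
  assume "s \<in> {s. (\<forall>i<4. s i \<in> {-1, 1}) \<and> (\<forall>i. 4 \<le> i \<longrightarrow> s i = 1)}"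
  then have s: "s 0 \<in> {-1, 1}" "s 1 \<in> {-1, 1}" "s 2 \<in> {-1, 1}" "s 3 \<in> {-1, 1}"
    and s_high: "\<And>i. 4 \<le> i \<Longrightarrow> s i = 1"
    by auto
  have "state (state_index s) i = s i" for i
  proof (cases "i < 4")
    case True
    then show ?thesis
      using s less_4_cases[OF True] by (auto simp: state_index_def state_def)
  qed (simp add: state_def s_high)
  moreover have "state_index s \<in> {1..16}"
    using s by (auto simp: state_index_def)
  ultimately show "s \<in> state ` {1..16}"
    by (metis ext image_eqI)
qed

lemma configs_eq: "configs M = {\<sigma>. (\<forall>m<M. \<sigma> m \<in> state ` {1..16}) \<and> (\<forall>m. M \<le> m \<longrightarrow> \<sigma> m = (\<lambda>_. 1))}"
  unfolding configs_def state_image by (auto simp: fun_eq_iff) (metis not_le)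

definition config_of :: "nat \<Rightarrow> (nat \<Rightarrow> nat) \<Rightarrow> nat \<Rightarrow> nat \<Rightarrow> int" where
  "config_of M f m = (if m < M then state (f m) else (\<lambda>_. 1))"

lemma bij_betw_config_of:
  assumes X: "X \<subseteq> {1..16}"
  shows "bij_betw (config_of M) (PiE {..<M} (\<lambda>_. X)) {\<sigma> \<in> configs M. \<forall>m<M. \<sigma> m \<in> state ` X}"
proof (rule bij_betw_imageI)
  show "inj_on (config_of M) (PiE {..<M} (\<lambda>_. X))"
  proof (rule inj_onI)
    fix f g
    assume f: "f \<in> PiE {..<M} (\<lambda>_. X)" and g: "g \<in> PiE {..<M} (\<lambda>_. X)"
      and "config_of M f = config_of M g"
    show "f = g"
    proof (rule PiE_ext[OF f g])
      fix m
      assume "m \<in> {..<M}"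
      moreover have "config_of M f m = config_of M g m"
        using \<open>config_of M f = config_of M g\<close> by simp
      ultimately have "state (f m) = state (g m)" "f m \<in> {1..16}" "g m \<in> {1..16}"
        using f g X by (auto simp: config_of_def PiE_iff)
      then show "f m = g m"
        by (metis state_index_state)
    qed
  qed
  show "config_of M ` PiE {..<M} (\<lambda>_. X) = {\<sigma> \<in> configs M. \<forall>m<M. \<sigma> m \<in> state ` X}"
  proof (intro equalityI subsetI)
    fix \<sigma>
    assume "\<sigma> \<in> config_of M ` PiE {..<M} (\<lambda>_. X)"
    then show "\<sigma> \<in> {\<sigma> \<in> configs M. \<forall>m<M. \<sigma> m \<in> state ` X}"
      using X by (force simp: configs_eq config_of_def PiE_iff)
  next
    fix \<sigma>
    assume "\<sigma> \<in> {\<sigma> \<in> configs M. \<forall>m<M. \<sigma> m \<in> state ` X}"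
    then have \<sigma>: "\<forall>m<M. \<sigma> m \<in> state ` X" "\<forall>m. M \<le> m \<longrightarrow> \<sigma> m = (\<lambda>_. 1)"
      by (auto simp: configs_eq)
    define f where "f = restrict (\<lambda>m. state_index (\<sigma> m)) {..<M}"
    have "state (f m) = \<sigma> m \<and> f m \<in> X" if "m < M" for m
    proof -
      obtain k where "k \<in> X" "\<sigma> m = state k"
        using \<sigma>(1) \<open>m < M\<close> by blast
      then show ?thesis
        using X that by (auto simp: f_def state_index_state)
    qed
    then have "f \<in> PiE {..<M} (\<lambda>_. X)" "config_of M f = \<sigma>"
      using \<sigma>(2) by (auto simp: f_def config_of_def fun_eq_iff)
    then show "\<sigma> \<in> config_of M ` PiE {..<M} (\<lambda>_. X)"
      by blast
  qed
qed

lemma exp_Htot_config_of: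
  "exp (- Htot J M (config_of M f) / (kB * T)) = (\<Prod>m<M. theta J kB T (f m) (f ((m + 1) mod M)))"
proof -
  have "Htot J M (config_of M f) = (\<Sum>m<M. Hlayer J (state (f m)) (state (f ((m + 1) mod M))))"
    unfolding Htot_def by (intro sum.cong) (auto simp: config_of_def)
  then have "- Htot J M (config_of M f) / (kB * T)
      = (\<Sum>m<M. - Hlayer J (state (f m)) (state (f ((m + 1) mod M))) / (kB * T))"
    by (simp add: sum_negf sum_divide_distrib)
  then show ?thesis
    by (simp add: exp_sum theta_def)
qed

lemma sum_configs_eq_closed_walk_sum:
  assumes "X \<subseteq> {1..16}"
  shows "(\<Sum>\<sigma>\<in>{\<sigma> \<in> configs M. \<forall>m<M. \<sigma> m \<in> state ` X}. exp (- Htot J M \<sigma> / (kB * T)))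
           = closed_walk_sum (theta J kB T) X M"
  unfolding closed_walk_sum_def exp_Htot_config_of[symmetric]
  by (rule sum.reindex_bij_betw[OF bij_betw_config_of[OF assms], symmetric])

lemma Z_eq_closed_walk_sum: "Z J kB T M = closed_walk_sum (theta J kB T) {1..16} M"
proof -
  have "{\<sigma> \<in> configs M. \<forall>m<M. \<sigma> m \<in> state ` {1..16}} = configs M"
    by (auto simp: configs_eq)
  then show ?thesis
    using sum_configs_eq_closed_walk_sum[of "{1..16}" J M kB T] by (simp only: Z_def order_refl)
qed

lemma percolating_layer_iff:
  "k \<in> {1..16} \<Longrightarrow> (\<exists>i<4. state k i = -1 \<and> state k ((i + 1) mod 4) = -1) \<longleftrightarrow> k \<notin> nonpercolating_layers"
  unfolding ex_less_4_nat nonpercolating_layers_def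
  by (drule layer_index_cases) (elim disjE; simp add: state_def)

lemma Z'_eq_closed_walk_sum: "Z' J kB T M = closed_walk_sum (theta J kB T) nonpercolating_layers M"
proof -
  have NP: "nonpercolating_layers \<subseteq> {1..16}"
    by (auto simp: nonpercolating_layers_def)
  have "\<not> percolation M \<sigma> \<longleftrightarrow> (\<forall>m<M. \<sigma> m \<in> state ` nonpercolating_layers)" if "\<sigma> \<in> configs M" for \<sigma>
  proof -
    have "\<forall>m<M. \<exists>k\<in>{1..16}. \<sigma> m = state k"
      using that by (auto simp: configs_eq)
    then show ?thesis
      unfolding percolation_def using percolating_layer_iff state_mem_image_iff[OF _ NP] by metis
  qed
  then have "{\<sigma> \<in> configs M. \<not> percolation M \<sigma>}
      = {\<sigma> \<in> configs M. \<forall>m<M. \<sigma> m \<in> state ` nonpercolating_layers}"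
    by blast
  then show ?thesis
    using sum_configs_eq_closed_walk_sum[OF NP, of J M kB T] by (simp only: Z'_def)
qed

section \<open>The non-percolation probability\<close>

lemma tau_carrier: "tau J kB T \<in> carrier_mat 4 4"
  by (simp add: tau_def)

lemma tau'_carrier: "tau' J kB T \<in> carrier_mat 3 3"
  by (simp add: tau'_def)

lemma ln_Z_div_tendsto: "(\<lambda>M. ln (Z J kB T M) / real M) \<longlonglongrightarrow> ln (largest_real_root (tau J kB T))"
proof -
  obtain w where w_pos: "\<forall>i<4. w i > 0"
    and w_eigen: "\<forall>i<4. (\<Sum>j<4. tau J kB T $$ (i, j) * w j) = largest_real_root (tau J kB T) * w i"
    using largest_real_root_positive_mat(2)[where 'n = 4, OF _ tau_carrier[of J kB T] tau_pos]
    by auto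
  have eigen: "(\<Sum>l\<in>{1..16}. theta J kB T k l * w (tau_class l))
      = largest_real_root (tau J kB T) * w (tau_class k)"
    if "k \<in> {1..16}" for k
  proof (rule lumped_eigenvector[where n = 4 and Q = "\<lambda>i j. tau J kB T $$ (i, j)",
        OF _ _ tau_lumpable])
    show "finite {1..16::nat}" "tau_class ` {1..16} \<subseteq> {..<4}"
      by (auto simp: tau_class_def)
  qed (use w_eigen that in auto)
  have "{1..16::nat} \<noteq> {}" "\<And>l. tau_class l < 4"
    by (auto simp: tau_class_def)
  then show ?thesis
    unfolding Z_eq_closed_walk_sum
    by (intro closed_walk_sum_growth[OF _ _ _ _ eigen]) (auto simp: w_pos theta_pos)
qed

lemma ln_Z'_div_tendsto: "(\<lambda>M. ln (Z' J kB T M) / real M) \<longlonglongrightarrow> ln (largest_real_root (tau' J kB T))"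
proof -
  obtain w where w_pos: "\<forall>i<3. w i > 0"
    and w_eigen: "\<forall>i<3. (\<Sum>j<3. tau' J kB T $$ (i, j) * w j) = largest_real_root (tau' J kB T) * w i"
    using largest_real_root_positive_mat(2)[where 'n = 3, OF _ tau'_carrier[of J kB T] tau'_pos]
    by auto
  have eigen: "(\<Sum>l\<in>nonpercolating_layers. theta J kB T k l * w (tau'_class l))
      = largest_real_root (tau' J kB T) * w (tau'_class k)"
    if "k \<in> nonpercolating_layers" for k
  proof (rule lumped_eigenvector[where n = 3 and Q = "\<lambda>i j. tau' J kB T $$ (i, j)",
        OF _ _ tau'_lumpable])
    show "finite nonpercolating_layers" "tau'_class ` nonpercolating_layers \<subseteq> {..<3}"
      by (auto simp: tau'_class_def nonpercolating_layers_def)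
  qed (use w_eigen that in auto)
  have "nonpercolating_layers \<noteq> {}" "\<And>l. tau'_class l < 3"
    by (auto simp: tau'_class_def nonpercolating_layers_def)
  then show ?thesis
    unfolding Z'_eq_closed_walk_sum
    by (intro closed_walk_sum_growth[OF _ _ _ _ eigen])
      (auto simp: w_pos theta_pos nonpercolating_layers_def)
qed

theorem theorem2:
  fixes J :: "site set \<Rightarrow> real" and kB T :: real
  assumes "kB > 0" and "T > 0"
  shows "(\<lambda>M. ln (Pnp J kB T M) / real M) \<longlonglongrightarrow>
           ln (largest_real_root (tau' J kB T) / largest_real_root (tau J kB T))"
proof -
  have "ln (Pnp J kB T M) / real M = ln (Z' J kB T M) / real M - ln (Z J kB T M) / real M" for M
  proof -
    have "Z J kB T M > 0" "Z' J kB T M > 0"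
      unfolding Z_eq_closed_walk_sum Z'_eq_closed_walk_sum
      by (auto intro!: closed_walk_sum_pos simp: theta_pos nonpercolating_layers_def)
    then show ?thesis
      by (simp add: Pnp_def ln_div diff_divide_distrib)
  qed
  moreover have "largest_real_root (tau J kB T) > 0" "largest_real_root (tau' J kB T) > 0"
    using largest_real_root_positive_mat(1)[where 'n = 4, OF _ tau_carrier[of J kB T] tau_pos]
      largest_real_root_positive_mat(1)[where 'n = 3, OF _ tau'_carrier[of J kB T] tau'_pos] by auto
  ultimately show ?thesis
    using tendsto_diff[OF ln_Z'_div_tendsto ln_Z_div_tendsto] by (simp add: ln_div)
qed

end
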